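(* Let $p$ be an odd prime and let $G_{g\,\mathsf{PR},\,h\,\mathsf{ANY}}(p)$ denote the number of integers $h$ with $1\le h\le p-1$ for which there exists a primitive root $g$ modulo $p$, $1\le g\le p-1$, with $g^{h}\equiv h\pmod p$. Then \[ \left|G_{g\,\mathsf{PR},\,h\,\mathsf{ANY}}(p)-\frac{1}{p-1}\sum_{e\mid p-1}\phi\!\left(\frac{p-1}{e}\right)^{2}\right|\le d(p-1)^{3}\sqrt{p}\,(1+\ln p). \]
   Context: $\phi$ is Euler's totient function, $d(n)$ denotes the number of positive divisors of $n$, the sum runs over positive divisors $e$ of $p-1$, and $\ln$ is the natural logarithm. *)

theory Defs
  imports "HOL-Number_Theory.Number_Theory"
begin

definition num_divisors :: "nat \<Rightarrow> nat" where
  "num_divisors n = card {d. d dvd n}"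

definition G_PR_ANY :: "nat \<Rightarrow> nat" where
  "G_PR_ANY p = card {h \<in> {1..p-1}. \<exists>g \<in> {1..p-1}. residue_primroot p g \<and> [g ^ h = h] (mod p)}"

end

theory Submission
  imports Defs "HOL-Analysis.Analysis"
begin

text \<open>Fix a primitive root \<open>g\<close> modulo \<open>p\<close> and let \<open>ind h\<close> be the index of \<open>h\<close> to base \<open>g\<close>.
  The primitive roots are the \<open>g\<^sup>j\<close> with \<open>j\<close> coprime to \<open>p - 1\<close>, so \<open>h\<close> is counted iff
  \<open>j h \<equiv> ind h (mod p - 1)\<close> has such a solution \<open>j\<close>, i.e. iff \<open>gcd h (p - 1) = gcd (ind h) (p - 1)\<close>.
  Splitting by the common value \<open>e\<close> of the two gcds and expanding both gcd conditions by
  inclusion-exclusion over the prime factors of \<open>(p - 1) / e\<close> leaves at most \<open>d(p - 1)\<^sup>3\<close> counts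
  of the \<open>h\<close> with \<open>a dvd h\<close> and \<open>b dvd ind h\<close>.  These \<open>h\<close> are the \<open>a j\<close> with \<open>j \<le> (p - 1) / a\<close>
  lying in a coset of the group of \<open>((p - 1) / b)\<close>-th roots of unity.  Exponential sums over such a
  coset are at most \<open>\<surd>p\<close> (Parseval plus invariance), so by finite Fourier analysis on the interval
  each count is \<open>(p - 1)\<^sup>2 / (a b p)\<close> up to \<open>\<surd>p (1 + ln ((p - 1) / 2))\<close>.  The main terms add up to
  \<open>\<Sum>\<^sub>e \<phi>((p - 1) / e)\<^sup>2 / p\<close>.\<close>

lemma jordan_inequality:
  fixes x :: real
  assumes "0 \<le> x" "x \<le> pi / 2"
  shows "2 * x / pi \<le> sin x"
proof -
  have "convex_on {0..pi/2} (\<lambda>x. - sin x)"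
  proof (rule convex_on_realI[where f'="\<lambda>x. - cos x"])
    show "connected {0..pi/2::real}" by simp
    show "((\<lambda>x. - sin x) has_real_derivative - cos x) (at x)" for x
      by (auto intro!: derivative_eq_intros)
    show "- cos x \<le> - cos y" if "x \<in> {0..pi/2}" "y \<in> {0..pi/2}" "x \<le> y" for x y
      using that by (auto intro!: cos_monotone_0_pi_le)
  qed
  moreover define u where "u = 2 * x / pi"
  moreover have "0 \<le> u" "u \<le> 1" using assms by (auto simp: u_def field_simps)
  ultimately have "- sin ((1 - u) *\<^sub>R 0 + u *\<^sub>R (pi/2)) \<le> (1 - u) * (- sin 0) + u * (- sin (pi/2))"
    by (intro convex_onD) auto
  moreover have "(1 - u) *\<^sub>R 0 + u *\<^sub>R (pi/2) = x" by (simp add: u_def)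
  ultimately show ?thesis by (simp add: u_def)
qed

lemma harm_le_one_plus_ln: "k \<ge> 1 \<Longrightarrow> (harm k :: real) \<le> 1 + ln (real k)"
  using euler_mascheroni_sequence_decreasing[of 1 k] by (simp add: harm_def)

lemma inverse_sin_le:
  assumes "1 \<le> s" "2 * s \<le> n"
  shows "1 / sin (pi * real s / real n) \<le> real n / (2 * real s)"
proof -
  have "pi * real s / real n = (pi / 2) * (2 * real s / real n)" by simp
  also have "\<dots> \<le> pi / 2"
    using assms by (intro mult_left_le) (auto simp: field_simps)
  finally have "2 * (pi * real s / real n) / pi \<le> sin (pi * real s / real n)"
    by (intro jordan_inequality) auto
  hence sin_ge: "2 * real s / real n \<le> sin (pi * real s / real n)" by simp
  have pos: "0 < 2 * real s / real n" using assms by auto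
  have "1 / sin (pi * real s / real n) \<le> 1 / (2 * real s / real n)"
    using mult_pos_pos[OF less_le_trans[OF pos sin_ge] pos] by (intro divide_left_mono[OF sin_ge]) auto
  thus ?thesis by simp
qed

lemma sum_inverse_sin_le:
  assumes "odd n" "n \<ge> 3"
  shows "(\<Sum>t\<in>{1..n-1}. 1 / sin (pi * real t / real n)) \<le> real n * (1 + ln ((real n - 1) / 2))"
proof -
  define k where "k = (n - 1) div 2"
  define f where "f t = 1 / sin (pi * real t / real n)" for t
  have n: "n = 2 * k + 1" using assms by (auto simp: k_def elim!: oddE)
  have "{1..n-1} = {1..k} \<union> {k+1..2*k}" using n by auto
  hence "(\<Sum>t\<in>{1..n-1}. f t) = (\<Sum>t\<in>{1..k}. f t) + (\<Sum>t\<in>{k+1..2*k}. f t)"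
    by (simp add: sum.union_disjoint)
  also have "(\<Sum>t\<in>{k+1..2*k}. f t) = (\<Sum>s\<in>{1..k}. f (n - s))"
    by (rule sum.reindex_bij_witness[where i="\<lambda>t. n - t" and j="\<lambda>s. n - s"]) (use n in auto)
  also have "(\<Sum>s\<in>{1..k}. f (n - s)) = (\<Sum>s\<in>{1..k}. f s)"
  proof (intro sum.cong refl)
    fix s assume "s \<in> {1..k}"
    hence "pi * real (n - s) / real n = pi - pi * real s / real n" using n by (simp add: field_simps)
    thus "f (n - s) = f s" by (simp add: f_def)
  qed
  also have "(\<Sum>t\<in>{1..k}. f t) + (\<Sum>t\<in>{1..k}. f t) \<le> 2 * (\<Sum>t\<in>{1..k}. real n / (2 * real t))"
    using inverse_sin_le[of _ n] n by (auto simp: f_def intro!: sum_mono)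
  also have "\<dots> = real n * harm k" by (simp add: harm_def sum_distrib_left field_simps)
  also have "\<dots> \<le> real n * (1 + ln (real k))"
    using harm_le_one_plus_ln[of k] assms n by (intro mult_left_mono) auto
  finally show ?thesis using n by (simp add: f_def)
qed

lemma cube_mult_sqrt_ln_half_add_le:
  fixes d p :: real
  assumes "d \<ge> 2" "p \<ge> 3"
  shows "d ^ 3 * (sqrt p * (1 + ln ((p - 1) / 2))) + d \<le> d ^ 3 * sqrt p * (1 + ln p)"
proof -
  have "1/2 - (1/2)^2 \<le> ln (1 + 1/2 :: real)" by (rule ln_one_plus_pos_lower_bound) auto
  also have "\<dots> \<le> ln 2" by (intro ln_mono) auto
  finally have "ln 2 \<ge> (1/4 :: real)" by (simp add: power2_eq_square)
  moreover have "ln ((p - 1) / 2) \<le> ln (p / 2)" using assms by (intro ln_mono) auto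
  moreover have "ln (p / 2) = ln p - ln 2" using assms by (simp add: ln_div)
  ultimately have "ln ((p - 1) / 2) \<le> ln p - 1/4" by linarith
  hence "d ^ 3 * (sqrt p * (1 + ln ((p - 1) / 2))) \<le> d ^ 3 * (sqrt p * (1 + ln p - 1/4))"
    using assms by (intro mult_left_mono) auto
  moreover have "d \<le> d ^ 3 * sqrt p / 4"
  proof -
    have "(2::real) ^ 2 \<le> d ^ 2" using assms by (intro power_mono) auto
    hence "d * 4 \<le> d * d ^ 2" using assms by (intro mult_left_mono) auto
    also have "\<dots> \<le> d ^ 3 * sqrt p" using assms by (simp add: power3_eq_cube power2_eq_square)
    finally show ?thesis by simp
  qed
  ultimately show ?thesis by (simp add: algebra_simps)
qed

section \<open>Additive characters and exponential sums\<close>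

definition add_char :: "nat \<Rightarrow> int \<Rightarrow> complex" where
  "add_char n z = cis (2 * pi * of_int z / of_nat n)"

lemma add_char_add: "add_char n (a + b) = add_char n a * add_char n b"
  by (simp add: add_char_def cis_mult add_divide_distrib distrib_left)

lemma add_char_0 [simp]: "add_char n 0 = 1"
  by (simp add: add_char_def)

lemma norm_add_char [simp]: "norm (add_char n z) = 1"
  by (simp add: add_char_def)

lemma cnj_add_char: "cnj (add_char n z) = add_char n (- z)"
  by (simp add: add_char_def cis_cnj)

lemma add_char_power: "add_char n z ^ k = add_char n (int k * z)"
proof -
  have "add_char n z ^ k = cis (real k * (2 * pi * of_int z / of_nat n))"
    unfolding add_char_def by (rule Complex.DeMoivre)
  thus ?thesis by (simp add: add_char_def mult_ac)
qed

lemma add_char_eq_1_iff: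
  assumes "n > 0"
  shows "add_char n z = 1 \<longleftrightarrow> int n dvd z"
proof
  assume "add_char n z = 1"
  hence "cos (2 * pi * of_int z / of_nat n) = 1"
    by (simp add: add_char_def complex_eq_iff)
  then obtain k :: int where "2 * pi * of_int z / of_nat n = of_int k * 2 * pi"
    by (auto simp: cos_one_2pi_int)
  hence "real_of_int z = real_of_int (k * int n)" using assms by (simp add: field_simps)
  thus "int n dvd z" by (simp only: of_int_eq_iff) simp
next
  assume "int n dvd z"
  then obtain k where "z = int n * k" by blast
  hence "2 * pi * of_int z / of_nat n = 2 * pi * of_int k" using assms by simp
  thus "add_char n z = 1" by (simp add: add_char_def)
qed

lemma add_char_cong:
  assumes "n > 0" "[a = b] (mod int n)"
  shows "add_char n a = add_char n b"
proof -
  obtain k where "a = b + int n * k" using assms(2) by (metis cong_iff_lin cong_sym)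
  thus ?thesis using add_char_eq_1_iff[OF assms(1), of "int n * k"] by (simp add: add_char_add)
qed

lemma sum_add_char:
  assumes "n > 0"
  shows "(\<Sum>t<n. add_char n (int t * z)) = (if int n dvd z then of_nat n else 0)"
proof -
  define w where "w = add_char n z"
  have "(\<Sum>t<n. add_char n (int t * z)) = (\<Sum>t<n. w ^ t)"
    by (simp add: w_def add_char_power)
  moreover have "w ^ n = 1"
    using add_char_eq_1_iff[OF assms, of "int n * z"] by (simp add: w_def add_char_power)
  moreover have "w = 1 \<longleftrightarrow> int n dvd z"
    unfolding w_def by (rule add_char_eq_1_iff[OF assms])
  ultimately show ?thesis by (auto simp: geometric_sum)
qed

lemma sum_add_char_diff:
  assumes "x < n" "y < n"
  shows "(\<Sum>t<n. add_char n (int t * (int x - int y))) = (if x = y then of_nat n else 0)"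
proof -
  have "int n dvd int x - int y \<longleftrightarrow> x = y"
  proof
    assume "int n dvd int x - int y"
    moreover have "\<bar>int x - int y\<bar> < \<bar>int n\<bar>" using assms by auto
    ultimately show "x = y" using dvd_imp_le_int[of "int x - int y" "int n"] by linarith
  qed simp
  thus ?thesis using assms by (simp add: sum_add_char)
qed

lemma norm_cis_minus_1: "norm (cis \<theta> - 1) = 2 * \<bar>sin (\<theta> / 2)\<bar>"
proof -
  have "norm (cis \<theta> - 1) ^ 2 = (cos \<theta> - 1) ^ 2 + (sin \<theta>) ^ 2"
    by (simp add: cmod_power2)
  also have "\<dots> = 2 - 2 * cos (2 * (\<theta> / 2))"
    by (simp add: power2_eq_square algebra_simps sin_squared_eq)
  also have "\<dots> = (2 * \<bar>sin (\<theta> / 2)\<bar>) ^ 2"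
    by (simp only: cos_double_sin) (simp add: power2_eq_square)
  finally show ?thesis by (rule power2_eq_imp_eq) auto
qed

lemma norm_sum_add_char_interval_le:
  assumes "1 \<le> t" "t < n"
  shows "norm (\<Sum>j\<in>{1..N}. add_char n (- (int t * int j))) \<le> 1 / sin (pi * real t / real n)"
proof -
  define w where "w = add_char n (- int t)"
  have "\<not> int n dvd - int t" using assms by (auto dest: zdvd_imp_le)
  hence "w \<noteq> 1" using assms by (simp add: w_def add_char_eq_1_iff)
  have sin_pos: "sin (pi * real t / real n) > 0"
    using assms by (intro sin_gt_zero) (auto simp: field_simps)
  have "(\<Sum>j\<in>{1..N}. add_char n (- (int t * int j))) = (\<Sum>i<N. w ^ Suc i)"
    by (rule sum.reindex_bij_witness[where j="\<lambda>j. j - 1" and i="Suc"])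
       (auto simp: w_def add_char_power mult_ac)
  also have "\<dots> = w * (w ^ N - 1) / (w - 1)"
    using \<open>w \<noteq> 1\<close> by (simp add: sum_distrib_left[symmetric] geometric_sum)
  finally have eq: "(\<Sum>j\<in>{1..N}. add_char n (- (int t * int j))) = w * (w ^ N - 1) / (w - 1)" .
  have num: "norm (w ^ N - 1) \<le> 2"
    using norm_triangle_ineq4[of "w ^ N" 1] by (simp add: w_def norm_power)
  have den: "norm (w - 1) = 2 * sin (pi * real t / real n)"
    using sin_pos by (simp add: w_def add_char_def norm_cis_minus_1)
  have "norm (w * (w ^ N - 1) / (w - 1)) \<le> 2 / (2 * sin (pi * real t / real n))"
    unfolding norm_divide norm_mult den using num sin_pos by (intro divide_right_mono) (auto simp: w_def)
  thus ?thesis unfolding eq by simp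
qed

definition exp_sum :: "nat \<Rightarrow> nat set \<Rightarrow> nat \<Rightarrow> complex" where
  "exp_sum n C t = (\<Sum>x\<in>C. add_char n (int t * int x))"

lemma card_interval_fourier:
  assumes "C \<subseteq> {..<n}" "N < n"
  shows "of_nat n * of_nat (card {j\<in>{1..N}. j \<in> C}) =
         of_nat (card C * N) +
         (\<Sum>t\<in>{1..n-1}. exp_sum n C t * (\<Sum>j\<in>{1..N}. add_char n (- (int t * int j))))"
proof -
  define T where "T t = (\<Sum>j\<in>{1..N}. add_char n (- (int t * int j)))" for t
  have fin: "finite C" using assms(1) finite_subset by blast
  have "(\<Sum>t<n. exp_sum n C t * T t) =
        (\<Sum>t<n. \<Sum>x\<in>C. \<Sum>j\<in>{1..N}. add_char n (int t * (int x - int j)))"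
    by (simp add: exp_sum_def T_def sum_product add_char_add[symmetric] algebra_simps)
  also have "\<dots> = (\<Sum>x\<in>C. \<Sum>j\<in>{1..N}. \<Sum>t<n. add_char n (int t * (int x - int j)))"
    by (simp add: sum.swap[of _ "{..<n}"] sum.swap[of _ "{1..N}"])
  also have "\<dots> = (\<Sum>x\<in>C. \<Sum>j\<in>{1..N}. if x = j then of_nat n else 0)"
    using assms by (intro sum.cong refl sum_add_char_diff) auto
  also have "\<dots> = of_nat n * of_nat (card {j\<in>{1..N}. j \<in> C})"
    using fin by (simp add: sum.If_cases Int_def conj_commute)
  finally have "(\<Sum>t<n. exp_sum n C t * T t) = of_nat n * of_nat (card {j\<in>{1..N}. j \<in> C})" .
  moreover have "{..<n} = insert 0 {1..n-1}" using assms(2) by auto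
  moreover have "exp_sum n C 0 = of_nat (card C)" "T 0 = of_nat N" by (simp_all add: exp_sum_def T_def)
  ultimately show ?thesis by (simp add: T_def)
qed

lemma card_interval_deviation_le:
  assumes "odd n" "n \<ge> 3" "C \<subseteq> {..<n}" "N < n"
    and bound: "\<And>t. t \<in> {1..n-1} \<Longrightarrow> norm (exp_sum n C t) \<le> B"
  shows "\<bar>real (card {j\<in>{1..N}. j \<in> C}) - real (card C) * real N / real n\<bar>
           \<le> B * (1 + ln ((real n - 1) / 2))"
proof -
  define A where "A = card {j\<in>{1..N}. j \<in> C}"
  have "norm (exp_sum n C 1) \<le> B" using bound[of 1] assms(2) by simp
  hence "B \<ge> 0" by (rule order.trans[OF norm_ge_zero])
  have "real n * \<bar>real A - real (card C) * real N / real n\<bar> =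
        norm (of_nat n * of_nat A - of_nat (card C * N) :: complex)"
  proof -
    have "(of_nat n * of_nat A - of_nat (card C * N) :: complex) =
          of_real (real n * (real A - real (card C) * real N / real n))"
      using assms(2) by (simp add: field_simps)
    thus ?thesis by (simp only: norm_of_real abs_mult)
  qed
  also have "\<dots> = norm (\<Sum>t\<in>{1..n-1}. exp_sum n C t * (\<Sum>j\<in>{1..N}. add_char n (- (int t * int j))))"
    unfolding A_def card_interval_fourier[OF assms(3,4)] by simp
  also have "\<dots> \<le> (\<Sum>t\<in>{1..n-1}. B * (1 / sin (pi * real t / real n)))"
  proof (rule order.trans[OF norm_sum sum_mono])
    fix t assume t: "t \<in> {1..n-1}"
    show "norm (exp_sum n C t * (\<Sum>j\<in>{1..N}. add_char n (- (int t * int j))))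
          \<le> B * (1 / sin (pi * real t / real n))"
      unfolding norm_mult using bound[OF t] norm_sum_add_char_interval_le[of t n N] t \<open>B \<ge> 0\<close>
      by (intro mult_mono) auto
  qed
  also have "\<dots> \<le> B * (real n * (1 + ln ((real n - 1) / 2)))"
    unfolding sum_distrib_left[symmetric]
    using sum_inverse_sin_le[OF assms(1,2)] \<open>B \<ge> 0\<close> by (rule mult_left_mono)
  finally show ?thesis using assms(2) by (simp add: A_def mult.left_commute)
qed

lemma sum_norm_exp_sum_sq:
  assumes "C \<subseteq> {..<n}"
  shows "(\<Sum>t<n. norm (exp_sum n C t) ^ 2) = real n * real (card C)"
proof -
  have fin: "finite C" using assms finite_subset by blast
  have "complex_of_real (norm (exp_sum n C t) ^ 2) = exp_sum n C t * cnj (exp_sum n C t)" for t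
    by (rule complex_norm_square)
  also have "exp_sum n C t * cnj (exp_sum n C t) =
             (\<Sum>x\<in>C. \<Sum>y\<in>C. add_char n (int t * (int x - int y)))" for t
    by (simp add: exp_sum_def cnj_sum cnj_add_char sum_product add_char_add[symmetric] algebra_simps)
  finally have "complex_of_real (\<Sum>t<n. norm (exp_sum n C t) ^ 2) =
                (\<Sum>x\<in>C. \<Sum>y\<in>C. \<Sum>t<n. add_char n (int t * (int x - int y)))"
    by (simp add: sum.swap[of _ "{..<n}"])
  also have "\<dots> = (\<Sum>x\<in>C. \<Sum>y\<in>C. if x = y then of_nat n else 0)"
    using assms by (intro sum.cong refl sum_add_char_diff) auto
  also have "\<dots> = complex_of_real (real n * real (card C))"
    using fin by simp
  finally show ?thesis by (simp only: of_real_eq_iff)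
qed

lemma exp_sum_mult_mod:
  assumes "n > 0" "bij_betw (\<lambda>x. u * x mod n) C C"
  shows "exp_sum n C (t * u mod n) = exp_sum n C t"
proof -
  have "[(t * u mod n) * x = t * (u * x mod n)] (mod n)" for x
    by (simp add: Cong.cong_def mod_mult_left_eq mod_mult_right_eq mult.assoc)
  hence "exp_sum n C (t * u mod n) = (\<Sum>x\<in>C. add_char n (int t * int (u * x mod n)))"
    unfolding exp_sum_def using assms(1)
    by (intro sum.cong refl add_char_cong) (simp_all flip: of_nat_mult cong_int_iff)
  also have "\<dots> = exp_sum n C t"
    unfolding exp_sum_def using assms(2) by (rule sum.reindex_bij_betw)
  finally show ?thesis .
qed

section \<open>Cosets of subgroups of the units modulo a prime\<close>

lemma coprime_if_mem_nonzero_residues: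
  fixes p :: nat
  assumes "prime p" "u \<in> {1..p-1}"
  shows "coprime u p"
proof -
  have "u \<in> totatives p" using assms by (auto simp: totatives_prime)
  thus ?thesis by (simp add: in_totatives_iff)
qed

lemma mult_mod_prime_mem_nonzero_residues:
  fixes p :: nat
  assumes "prime p" "u \<in> {1..p-1}" "x \<in> {1..p-1}"
  shows "u * x mod p \<in> {1..p-1}"
proof -
  have "\<not> p dvd v" if "v \<in> {1..p-1}" for v
    using that dvd_imp_le[of p v] by auto
  hence "\<not> p dvd u" "\<not> p dvd x" using assms by auto
  hence "\<not> p dvd u * x" using assms(1) by (simp add: prime_dvd_mult_iff)
  moreover have "u * x mod p < p" using prime_gt_0_nat[OF assms(1)] by simp
  ultimately show ?thesis by (auto simp: dvd_eq_mod_eq_0)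
qed

lemma inj_on_mult_mod:
  fixes u n :: nat
  assumes "coprime u n"
  shows "inj_on (\<lambda>x. u * x mod n) {..<n}"
proof
  fix x y assume "x \<in> {..<n}" "y \<in> {..<n}" "u * x mod n = u * y mod n"
  hence "[u * x = u * y] (mod n)" by (simp add: Cong.cong_def)
  hence "[x = y] (mod n)" using assms by (simp add: cong_mult_lcancel_nat)
  thus "x = y" using \<open>x \<in> {..<n}\<close> \<open>y \<in> {..<n}\<close> by (simp add: Cong.cong_def)
qed

lemma inj_on_mult_mod_prime:
  fixes p :: nat
  assumes "prime p" "u \<in> {1..p-1}"
  shows "inj_on (\<lambda>x. u * x mod p) {1..p-1}"
  using inj_on_mult_mod[OF coprime_if_mem_nonzero_residues[OF assms]] by (rule inj_on_subset) auto

lemma exists_inverse_mod_prime: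
  fixes p :: nat
  assumes "prime p" "a \<in> {1..p-1}"
  obtains a' where "a' \<in> {1..p-1}" "[a * a' = 1] (mod p)"
proof -
  obtain b where "[a * b = 1] (mod p)"
    using cong_solve_coprime_nat[OF coprime_if_mem_nonzero_residues[OF assms]] by auto
  hence ab: "[a * (b mod p) = 1] (mod p)" by (simp add: Cong.cong_def mod_mult_right_eq)
  have "b mod p \<noteq> 0"
  proof
    assume "b mod p = 0"
    with ab have "[0 = 1] (mod p)" by simp
    thus False using prime_gt_1_nat[OF assms(1)] by (simp add: Cong.cong_def)
  qed
  hence "b mod p \<in> {1..p-1}" using prime_gt_0_nat[OF assms(1)] by (simp add: less_Suc_eq_le[symmetric])
  thus ?thesis using ab by (rule that)
qed

lemma norm_exp_sum_le_sqrt: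
  assumes p: "prime p" and C: "C \<subseteq> {1..p-1}" and H: "H \<subseteq> {1..p-1}" and card: "card H = card C"
    and closed: "\<And>u x. u \<in> H \<Longrightarrow> x \<in> C \<Longrightarrow> u * x mod p \<in> C"
    and t: "t \<in> {1..p-1}"
  shows "norm (exp_sum p C t) \<le> sqrt (real p)"
proof -
  have "finite C" using C finite_subset by blast
  have "p > 0" using p prime_gt_0_nat by blast
  (* As C is H-invariant, exp_sum p C is constant on the coset t H; averaging over that coset
     and comparing with Parseval gives card C * norm (exp_sum p C t)\<^sup>2 \<le> card C * p. *)
  have invariant: "exp_sum p C (t * u mod p) = exp_sum p C t" if "u \<in> H" for u
  proof (rule exp_sum_mult_mod[OF \<open>p > 0\<close>])
    have "inj_on (\<lambda>x. u * x mod p) C"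
      using inj_on_mult_mod_prime[OF p] that H C by (blast intro: inj_on_subset)
    moreover have "(\<lambda>x. u * x mod p) ` C \<subseteq> C" using closed that by blast
    ultimately show "bij_betw (\<lambda>x. u * x mod p) C C"
      using \<open>finite C\<close> by (simp add: bij_betw_def card_image card_subset_eq)
  qed
  have "real (card C) * norm (exp_sum p C t) ^ 2 = (\<Sum>u\<in>H. norm (exp_sum p C (t * u mod p)) ^ 2)"
    using card by (simp add: invariant)
  also have "\<dots> = (\<Sum>s\<in>(\<lambda>u. t * u mod p) ` H. norm (exp_sum p C s) ^ 2)"
    using inj_on_subset[OF inj_on_mult_mod_prime[OF p t] H] by (simp add: sum.reindex)
  also have "\<dots> \<le> (\<Sum>s<p. norm (exp_sum p C s) ^ 2)"
    using \<open>p > 0\<close> by (intro sum_mono2) auto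
  also have "\<dots> = real (card C) * real p"
    using C by (subst sum_norm_exp_sum_sq) (auto dest!: subsetD)
  finally have "real (card C) * norm (exp_sum p C t) ^ 2 \<le> real (card C) * real p" .
  moreover have "exp_sum p C t = 0" if "card C = 0"
    using that \<open>finite C\<close> by (simp add: exp_sum_def)
  ultimately have "norm (exp_sum p C t) ^ 2 \<le> real p"
    by (cases "card C = 0") auto
  thus ?thesis by (rule real_le_rsqrt)
qed

definition unity_roots :: "nat \<Rightarrow> nat \<Rightarrow> nat set" where
  "unity_roots p r = {u \<in> {1..p-1}. [u ^ r = 1] (mod p)}"

(* For a unit a this is the coset a\<^sup>-\<^sup>1 H of H = unity_roots p r. *)
definition unity_roots_coset :: "nat \<Rightarrow> nat \<Rightarrow> nat \<Rightarrow> nat set" where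
  "unity_roots_coset p a r = {x \<in> {1..p-1}. [(a * x) ^ r = 1] (mod p)}"

lemma mult_mod_mem_unity_roots_coset:
  assumes "prime p" "u \<in> unity_roots p r" "x \<in> unity_roots_coset p a r"
  shows "u * x mod p \<in> unity_roots_coset p a r"
proof -
  have "[(a * (u * x mod p)) ^ r = (a * (u * x)) ^ r] (mod p)"
    by (intro cong_pow) (simp add: Cong.cong_def mod_mult_right_eq)
  also have "(a * (u * x)) ^ r = u ^ r * (a * x) ^ r" by (simp add: power_mult_distrib mult_ac)
  also have "[u ^ r * (a * x) ^ r = 1 * 1] (mod p)"
    using assms(2,3) by (intro cong_mult) (auto simp: unity_roots_def unity_roots_coset_def)
  finally show ?thesis
    using assms mult_mod_prime_mem_nonzero_residues
    by (auto simp: unity_roots_def unity_roots_coset_def)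
qed

lemma card_unity_roots_coset:
  assumes p: "prime p" and a: "a \<in> {1..p-1}"
  shows "card (unity_roots_coset p a r) = card (unity_roots p r)"
proof -
  obtain a' where a': "a' \<in> {1..p-1}" "[a * a' = 1] (mod p)"
    using exists_inverse_mod_prime[OF p a] by blast
  have sub: "unity_roots p r \<subseteq> {1..p-1}" "unity_roots_coset p a r \<subseteq> {1..p-1}"
    by (auto simp: unity_roots_def unity_roots_coset_def)
  have "(\<lambda>x. a * x mod p) ` unity_roots_coset p a r \<subseteq> unity_roots p r"
  proof
    fix y assume "y \<in> (\<lambda>x. a * x mod p) ` unity_roots_coset p a r"
    then obtain x where x: "x \<in> unity_roots_coset p a r" "y = a * x mod p" by blast
    have "[y ^ r = (a * x) ^ r] (mod p)" unfolding x(2) by (intro cong_pow) (simp add: Cong.cong_def)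
    also have "[(a * x) ^ r = 1] (mod p)" using x(1) by (simp add: unity_roots_coset_def)
    finally show "y \<in> unity_roots p r"
      using x mult_mod_prime_mem_nonzero_residues[OF p a] by (auto simp: unity_roots_def unity_roots_coset_def)
  qed
  moreover have "(\<lambda>u. a' * u mod p) ` unity_roots p r \<subseteq> unity_roots_coset p a r"
  proof
    fix y assume "y \<in> (\<lambda>u. a' * u mod p) ` unity_roots p r"
    then obtain u where u: "u \<in> unity_roots p r" "y = a' * u mod p" by blast
    have "[a * y = (a * a') * u] (mod p)"
      unfolding u(2) by (simp add: Cong.cong_def mod_mult_right_eq mult_ac)
    also have "[(a * a') * u = 1 * u] (mod p)" using a'(2) by (intro cong_mult cong_refl)
    finally have "[(a * y) ^ r = u ^ r] (mod p)" by (intro cong_pow) simp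
    also have "[u ^ r = 1] (mod p)" using u(1) by (simp add: unity_roots_def)
    finally show "y \<in> unity_roots_coset p a r"
      using u mult_mod_prime_mem_nonzero_residues[OF p a'(1)] by (auto simp: unity_roots_def unity_roots_coset_def)
  qed
  ultimately show ?thesis
    using inj_on_subset[OF inj_on_mult_mod_prime[OF p a] sub(2)]
      inj_on_subset[OF inj_on_mult_mod_prime[OF p a'(1)] sub(1)] finite_subset[OF sub(1)] finite_subset[OF sub(2)]
    by (intro antisym card_inj_on_le) auto
qed

lemma card_multiples_less:
  fixes b m :: nat
  assumes "b dvd m"
  shows "card {i. i < m \<and> b dvd i} = m div b"
proof (cases "b = 0")
  case False
  have "{i. i < m \<and> b dvd i} = (\<lambda>j. b * j) ` {..<m div b}"
    using assms False by (auto elim!: dvdE)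
  thus ?thesis using False by (simp add: card_image inj_on_def)
qed (use assms in simp)

section \<open>Units solving a linear congruence\<close>

lemma coprime_if_no_common_prime_divisor:
  fixes a b :: nat
  assumes "\<And>q. prime q \<Longrightarrow> q dvd a \<Longrightarrow> q dvd b \<Longrightarrow> False"
  shows "coprime a b"
proof (rule ccontr)
  assume "\<not> coprime a b"
  hence "gcd a b \<noteq> 1" by (simp only: coprime_iff_gcd_eq_1 not_False_eq_True)
  then obtain q where q: "prime q" "q dvd gcd a b" using prime_factor_nat by blast
  show False
  proof (rule assms[OF q(1)])
    show "q dvd a" using q(2) gcd_dvd1 by (rule dvd_trans)
    show "q dvd b" using q(2) gcd_dvd2 by (rule dvd_trans)
  qed
qed

lemma prime_dvd_prod_primes_iff:
  fixes S :: "nat set"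
  assumes "finite S" "\<forall>q\<in>S. prime q" "prime r"
  shows "r dvd \<Prod>S \<longleftrightarrow> r \<in> S"
proof
  assume "r dvd \<Prod>S"
  then obtain q where "q \<in> S" "r dvd q" using prime_dvd_prod_iff[OF assms(1,3)] by auto
  thus "r \<in> S" using assms primes_dvd_imp_eq by blast
qed (use assms dvd_prodI[of S r "\<lambda>x. x"] in simp)

lemma exists_coprime_cong:
  fixes n m j0 :: nat
  assumes "n > 0" "coprime j0 m"
  shows "\<exists>j. [j = j0] (mod m) \<and> coprime j n"
proof -
  define Q where "Q = {q \<in> prime_factors n. \<not> q dvd j0}"
  define j where "j = j0 + m * \<Prod>Q"
  have "finite Q" by (simp add: Q_def)
  (* A prime factor of n dividing j0 divides neither m nor \<Prod>Q; one not dividing j0 divides \<Prod>Q. *)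
  have "coprime j n"
  proof (rule coprime_if_no_common_prime_divisor)
    fix q :: nat assume q: "prime q" "q dvd j" "q dvd n"
    have q_dvd_Q: "q dvd \<Prod>Q \<longleftrightarrow> q \<in> Q"
      using prime_dvd_prod_primes_iff[OF \<open>finite Q\<close> _ q(1)] by (auto simp: Q_def in_prime_factors_iff)
    show False
    proof (cases "q dvd j0")
      case True
      hence "\<not> q dvd m" using q(1) assms(2) by (meson coprime_common_divisor not_prime_unit)
      moreover have "q dvd m * \<Prod>Q" using q(2) True by (simp add: j_def dvd_add_right_iff)
      ultimately show False using True q(1) q_dvd_Q by (simp add: prime_dvd_mult_iff Q_def)
    next
      case False
      hence "q dvd m * \<Prod>Q" using q assms(1) q_dvd_Q by (simp add: Q_def in_prime_factors_iff)
      thus False using q(2) False by (simp add: j_def dvd_add_left_iff)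
    qed
  qed
  moreover have "[j = j0] (mod m)" by (simp add: j_def Cong.cong_def)
  ultimately show ?thesis by blast
qed

lemma exists_coprime_mult_cong_iff_gcd_eq:
  fixes n h k :: nat
  assumes "n > 0"
  shows "(\<exists>j. coprime j n \<and> [j * h = k] (mod n)) \<longleftrightarrow> gcd h n = gcd k n"
proof
  assume "\<exists>j. coprime j n \<and> [j * h = k] (mod n)"
  then obtain j where "coprime j n" "[j * h = k] (mod n)" by blast
  thus "gcd h n = gcd k n"
    by (metis cong_gcd_eq coprime_commute gcd_mult_left_left_cancel)
next
  assume gcd_eq: "gcd h n = gcd k n"
  define e where "e = gcd h n"
  define h' k' m where "h' = h div e" and "k' = k div e" and "m = n div e"
  have hkn: "h = e * h'" "k = e * k'" "n = e * m"
    unfolding h'_def k'_def m_def e_def using gcd_eq by (metis dvd_mult_div_cancel gcd_dvd1 gcd_dvd2)+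
  have "coprime h' m" unfolding h'_def m_def e_def using assms by (simp add: div_gcd_coprime)
  have "coprime k' m" unfolding k'_def m_def e_def gcd_eq using assms by (simp add: div_gcd_coprime)
  obtain i where i: "[h' * i = 1] (mod m)" using cong_solve_coprime_nat[OF \<open>coprime h' m\<close>] by auto
  hence "coprime (i * k') m" using \<open>coprime k' m\<close> cong_imp_coprime[OF cong_sym[OF i]] by simp
  then obtain j where j: "[j = i * k'] (mod m)" "coprime j n"
    using exists_coprime_cong[OF assms] by blast
  have "[j * h' = (h' * i) * k'] (mod m)" using cong_scalar_right[OF j(1), of h'] by (simp add: mult_ac)
  also have "[(h' * i) * k' = 1 * k'] (mod m)" using i by (intro cong_mult cong_refl)
  finally have "[e * (j * h') = e * k'] (mod e * m)" by (simp add: Cong.cong_def mod_mult_mult1)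
  thus "\<exists>j. coprime j n \<and> [j * h = k] (mod n)"
    using j(2) hkn by (auto simp: mult_ac)
qed

lemma exists_totative_iff_exists_coprime:
  fixes n :: nat
  assumes "n > 1"
  shows "(\<exists>j\<in>totatives n. [j * h = k] (mod n)) \<longleftrightarrow> (\<exists>j. coprime j n \<and> [j * h = k] (mod n))"
proof
  assume "\<exists>j. coprime j n \<and> [j * h = k] (mod n)"
  then obtain j where j: "coprime j n" "[j * h = k] (mod n)" by blast
  have "coprime (j mod n) n" using j(1) assms by simp
  hence "j mod n \<in> totatives n" using assms by (auto simp: in_totatives_iff intro!: Nat.gr0I)
  moreover have "[j mod n * h = k] (mod n)"
    using j(2) by (simp add: Cong.cong_def mod_mult_left_eq)
  ultimately show "\<exists>j\<in>totatives n. [j * h = k] (mod n)" by blast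
qed (auto simp: in_totatives_iff)

section \<open>Squarefree divisors and inclusion-exclusion\<close>

lemma prod_primes_dvd_iff:
  fixes S :: "nat set"
  assumes "finite S" "\<forall>q\<in>S. prime q"
  shows "\<Prod>S dvd y \<longleftrightarrow> (\<forall>q\<in>S. q dvd y)"
  using assms
proof (induction S rule: finite_induct)
  case (insert q S)
  have "coprime q (\<Prod>S)"
    using insert prime_dvd_prod_primes_iff[of S q] by (intro prime_imp_coprime) auto
  thus ?case using insert by (auto simp: divides_mult dest: dvd_mult_left dvd_mult_right)
qed simp

lemma mult_prod_primes_dvd_iff:
  fixes S :: "nat set"
  assumes "finite S" "\<forall>q\<in>S. prime q" "e > 0"
  shows "e * \<Prod>S dvd x \<longleftrightarrow> e dvd x \<and> (\<forall>q\<in>S. e * q dvd x)"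
proof (cases "e dvd x")
  case True
  then obtain y where "x = e * y" by blast
  thus ?thesis using assms by (simp add: prod_primes_dvd_iff)
qed (auto intro: dvd_mult_left)

lemma prod_subset_prime_factors_dvd:
  fixes m :: nat
  assumes "S \<subseteq> prime_factors m"
  shows "\<Prod>S dvd m"
proof -
  have "finite S" using assms finite_subset by blast
  thus ?thesis using assms by (subst prod_primes_dvd_iff) (auto simp: in_prime_factors_iff)
qed

lemma gcd_eq_iff_prime_factors:
  fixes n e x :: nat
  assumes n: "n > 0" and e: "e dvd n"
  shows "gcd x n = e \<longleftrightarrow> e dvd x \<and> (\<forall>q\<in>prime_factors (n div e). \<not> e * q dvd x)"
proof
  assume gcd: "gcd x n = e"
  have "\<not> e * q dvd x" if q: "q \<in> prime_factors (n div e)" for q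
  proof
    assume "e * q dvd x"
    moreover have "e * q dvd e * (n div e)" using q by (simp add: in_prime_factors_iff)
    ultimately have "e * q dvd x" "e * q dvd n" using e by simp_all
    hence "e * q dvd e * 1" using gcd by (metis gcd_greatest mult_1_right)
    thus False using q e n by (auto simp: in_prime_factors_iff)
  qed
  thus "e dvd x \<and> (\<forall>q\<in>prime_factors (n div e). \<not> e * q dvd x)" using gcd by auto
next
  assume e_dvd: "e dvd x \<and> (\<forall>q\<in>prime_factors (n div e). \<not> e * q dvd x)"
  have "e > 0" using e n by (auto intro!: Nat.gr0I)
  obtain k where k: "gcd x n = e * k" using e_dvd e by (metis gcd_greatest dvdE)
  have "k dvd n div e" using k e \<open>e > 0\<close> by (metis dvd_mult_div_cancel gcd_dvd2 nat_mult_dvd_cancel1)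
  have "k = 1"
  proof (rule ccontr)
    assume "k \<noteq> 1"
    then obtain q where q: "prime q" "q dvd k" using prime_factor_nat by blast
    have "q \<in> prime_factors (n div e)"
      using q \<open>k dvd n div e\<close> n e by (auto simp: in_prime_factors_iff dvd_div_eq_0_iff intro: dvd_trans)
    moreover have "e * q dvd x" using q k by (metis gcd_dvd1 dvd_trans mult_dvd_mono dvd_refl)
    ultimately show False using e_dvd by blast
  qed
  thus "gcd x n = e" using k by simp
qed

lemma prod_of_bool:
  "finite X \<Longrightarrow> (\<Prod>x\<in>X. of_bool (P x) :: 'a :: comm_semiring_1) = of_bool (\<forall>x\<in>X. P x)"
  by (induction X rule: finite_induct) auto

lemma of_bool_gcd_eq_expansion:
  fixes n e x :: nat
  assumes "n > 0" "e dvd n"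
  shows "(of_bool (gcd x n = e) :: 'a :: comm_ring_1) =
         (\<Sum>S\<in>Pow (prime_factors (n div e)). (-1) ^ card S * of_bool (e * \<Prod>S dvd x))"
proof -
  define P where "P = prime_factors (n div e)"
  have "finite P" "\<forall>q\<in>P. prime q" by (auto simp: P_def in_prime_factors_iff)
  have "e > 0" using assms by (auto intro!: Nat.gr0I)
  have "(of_bool (gcd x n = e) :: 'a) = of_bool (e dvd x) * (\<Prod>q\<in>P. of_bool (\<not> e * q dvd x))"
    using gcd_eq_iff_prime_factors[OF assms, of x]
    by (simp add: prod_of_bool[OF \<open>finite P\<close>] of_bool_conj[symmetric] flip: P_def)
  also have "\<dots> = of_bool (e dvd x) * (\<Prod>q\<in>P. 1 - of_bool (e * q dvd x))"
    by (simp add: of_bool_not_iff)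
  also have "\<dots> = (\<Sum>S\<in>Pow P. (-1) ^ card S * (of_bool (e dvd x) * (\<Prod>q\<in>S. of_bool (e * q dvd x))))"
    by (simp add: prod_diff_conv_sum[OF \<open>finite P\<close>] sum_distrib_left mult_ac)
  also have "\<dots> = (\<Sum>S\<in>Pow P. (-1) ^ card S * of_bool (e * \<Prod>S dvd x))"
  proof (intro sum.cong refl arg_cong2[where f = times])
    fix S assume "S \<in> Pow P"
    hence S: "finite S" "\<forall>q\<in>S. prime q" using \<open>finite P\<close> \<open>\<forall>q\<in>P. prime q\<close> finite_subset by auto
    show "of_bool (e dvd x) * (\<Prod>q\<in>S. of_bool (e * q dvd x)) = (of_bool (e * \<Prod>S dvd x) :: 'a)"
      unfolding prod_of_bool[OF S(1)] of_bool_conj[symmetric]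
      using mult_prod_primes_dvd_iff[OF S \<open>e > 0\<close>, of x] by simp
  qed
  finally show ?thesis by (simp add: P_def)
qed

lemma sum_Pow_prime_factors_inverse_prod:
  fixes m :: nat
  assumes "m > 0"
  shows "(\<Sum>S\<in>Pow (prime_factors m). (-1) ^ card S / real (\<Prod>S)) = real (totient m) / real m"
proof -
  have "(\<Sum>S\<in>Pow (prime_factors m). (-1) ^ card S / real (\<Prod>S)) =
        (\<Prod>q\<in>prime_factors m. 1 - 1 / real q)"
    by (simp add: prod_diff_conv_sum prod_dividef)
  also have "\<dots> = real (totient m) / real m"
    using assms by (simp add: totient_formula2)
  finally show ?thesis .
qed

lemma sum_Pow_prime_factors_main_terms:
  fixes e m p :: nat
  assumes "e > 0" "m > 0"
  shows "(\<Sum>S\<in>Pow (prime_factors m). \<Sum>T\<in>Pow (prime_factors m). (-1) ^ card S * (-1) ^ card T *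
            (real (e * m) ^ 2 / (real (e * \<Prod>S) * real (e * \<Prod>T) * real p)))
         = real (totient m) ^ 2 / real p"
proof -
  define P where "P = Pow (prime_factors m)"
  define f where "f S = (-1) ^ card S / real (\<Prod>S)" for S :: "nat set"
  have term_eq: "(-1) ^ card S * (-1) ^ card T * (real (e * m) ^ 2 / (real (e * \<Prod>S) * real (e * \<Prod>T) * real p))
                 = real m ^ 2 / real p * (f S * f T)" for S T
    unfolding f_def using assms(1) by (simp add: field_simps power2_eq_square)
  have "(\<Sum>S\<in>P. \<Sum>T\<in>P. (-1) ^ card S * (-1) ^ card T *
          (real (e * m) ^ 2 / (real (e * \<Prod>S) * real (e * \<Prod>T) * real p)))
        = real m ^ 2 / real p * ((\<Sum>S\<in>P. f S) * (\<Sum>T\<in>P. f T))"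
    unfolding sum_product by (simp only: term_eq sum_distrib_left)
  also have "(\<Sum>S\<in>P. f S) = real (totient m) / real m"
    unfolding f_def P_def by (rule sum_Pow_prime_factors_inverse_prod[OF assms(2)])
  finally show ?thesis using assms(2) by (simp add: P_def power2_eq_square)
qed

lemma card_Pow_prime_factors_le_num_divisors:
  fixes m n :: nat
  assumes "n > 0" "m dvd n"
  shows "card (Pow (prime_factors m)) \<le> num_divisors n"
proof -
  have primes: "finite S" "\<forall>q\<in>S. prime q" if "S \<in> Pow (prime_factors m)" for S
    using that finite_subset by (auto simp: in_prime_factors_iff)
  have "inj_on (\<lambda>S. \<Prod>S) (Pow (prime_factors m))"
  proof (rule inj_onI)
    fix S T assume S: "S \<in> Pow (prime_factors m)" and T: "T \<in> Pow (prime_factors m)" and "\<Prod>S = \<Prod>T"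
    hence "q \<in> S \<longleftrightarrow> q \<in> T" if "prime q" for q
      using prime_dvd_prod_primes_iff[OF primes[OF S] that] prime_dvd_prod_primes_iff[OF primes[OF T] that]
      by simp
    thus "S = T" using S T by (auto simp: in_prime_factors_iff)
  qed
  moreover have "(\<lambda>S. \<Prod>S) ` Pow (prime_factors m) \<subseteq> {d. d dvd n}"
  proof safe
    fix S assume "S \<subseteq> prime_factors m"
    hence "\<Prod>S dvd m" by (rule prod_subset_prime_factors_dvd)
    thus "\<Prod>S dvd n" using assms(2) by (rule dvd_trans)
  qed
  ultimately show ?thesis
    unfolding num_divisors_def using assms(1) by (intro card_inj_on_le) auto
qed

lemma two_le_num_divisors:
  assumes "n \<ge> 2"
  shows "num_divisors n \<ge> 2"
proof -
  have "card {1, n} \<le> num_divisors n"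
    unfolding num_divisors_def using assms by (intro card_mono) auto
  thus ?thesis using assms by simp
qed

lemma sum_totient_sq_div_Suc_approx:
  fixes n :: nat
  assumes "n > 0"
  shows "\<bar>(\<Sum>e | e dvd n. real (totient (n div e)) ^ 2) / real (n + 1)
          - (\<Sum>e | e dvd n. real (totient (n div e)) ^ 2) / real n\<bar> \<le> real (num_divisors n)"
proof -
  define Z where "Z = (\<Sum>e | e dvd n. real (totient (n div e)) ^ 2)"
  have "Z \<le> (\<Sum>e | e dvd n. real n ^ 2)"
    unfolding Z_def using totient_le[of "n div _"]
    by (intro sum_mono power_mono) (auto intro: order.trans[OF _ div_le_dividend])
  also have "\<dots> = real (num_divisors n) * real n ^ 2" by (simp add: num_divisors_def)
  finally have "Z / (real n * real (n + 1)) \<le> real (num_divisors n) * real n ^ 2 / (real n * real (n + 1))"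
    by (rule divide_right_mono) simp
  also have "\<dots> = real (num_divisors n) * (real n / real (n + 1))"
    using assms by (simp add: power2_eq_square)
  also have "\<dots> \<le> real (num_divisors n)" by (intro mult_left_le) auto
  finally have "Z / (real n * real (n + 1)) \<le> real (num_divisors n)" .
  moreover have "Z \<ge> 0" unfolding Z_def by (intro sum_nonneg) simp
  moreover have "Z / real n - Z / real (n + 1) = Z / (real n * real (n + 1))"
    using assms by (simp add: field_simps)
  ultimately have "\<bar>Z / real n - Z / real (n + 1)\<bar> \<le> real (num_divisors n)" by simp
  thus ?thesis by (simp add: abs_minus_commute Z_def)
qed

section \<open>Counting with the index to a primitive root\<close>

lemma bij_betw_restrict_Collect:
  assumes "bij_betw f A B"
  shows "bij_betw f {x \<in> A. P (f x)} {y \<in> B. P y}"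
proof -
  have "f ` {x \<in> A. P (f x)} = {y \<in> B. P y}"
    using bij_betw_imp_surj_on[OF assms] by blast
  thus ?thesis using bij_betw_imp_inj_on[OF assms] by (auto simp: bij_betw_def intro: inj_on_subset)
qed

lemma card_eq_sum_card_common_value:
  assumes "finite A" "finite E" "\<And>x. x \<in> A \<Longrightarrow> f x \<in> E"
  shows "card {x \<in> A. f x = f' x} = (\<Sum>e\<in>E. card {x \<in> A. f x = e \<and> f' x = e})"
proof -
  have "{x \<in> A. f x = f' x} = (\<Union>e\<in>E. {x \<in> A. f x = e \<and> f' x = e})" using assms(3) by (auto; metis)
  thus ?thesis using assms(1,2) by (simp only:) (intro card_UN_disjoint; auto)
qed

lemma real_card_eq_sum_of_bool:
  "finite A \<Longrightarrow> real (card {x \<in> A. P x}) = (\<Sum>x\<in>A. of_bool (P x))"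
  by (simp add: Int_def conj_commute)

locale odd_prime_primroot =
  fixes p g :: nat
  assumes prime: "prime p" and odd: "odd p" and primroot: "residue_primroot p g"
begin

lemma p_ge_3: "p \<ge> 3"
  using prime_ge_2_nat[OF prime] odd by (cases "p = 2") auto

lemma totatives_eq: "totatives p = {1..p-1}"
  using prime by (auto simp: totatives_prime)

lemma bij_betw_power_mod: "bij_betw (\<lambda>i. g ^ i mod p) {..<p-1} {1..p-1}"
  using residue_primroot_is_generator[OF prime_gt_1_nat[OF prime] primroot]
  by (simp add: totient_prime[OF prime] totatives_eq)

definition ind :: "nat \<Rightarrow> nat" where
  "ind x = inv_into {..<p-1} (\<lambda>i. g ^ i mod p) x"

lemma bij_betw_ind: "bij_betw ind {1..p-1} {..<p-1}"
  unfolding ind_def by (rule bij_betw_inv_into[OF bij_betw_power_mod])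

lemma power_ind_mod: "x \<in> {1..p-1} \<Longrightarrow> g ^ ind x mod p = x"
  unfolding ind_def by (rule bij_betw_inv_into_right[OF bij_betw_power_mod])

lemma power_ind_cong:
  assumes "x \<in> {1..p-1}"
  shows "[g ^ ind x = x] (mod p)"
proof -
  have "x < p" using assms p_ge_3 by auto
  thus ?thesis using power_ind_mod[OF assms] by (simp add: Cong.cong_def)
qed

lemma power_cong_iff: "[g ^ a = g ^ b] (mod p) \<longleftrightarrow> [a = b] (mod (p - 1))"
  using primroot order_divides_expdiff[of p g a b]
  by (simp add: residue_primroot_def totient_prime[OF prime])

lemma dvd_ind_iff:
  assumes x: "x \<in> {1..p-1}" and b: "b dvd p - 1"
  shows "b dvd ind x \<longleftrightarrow> [x ^ ((p - 1) div b) = 1] (mod p)"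
proof -
  define r where "r = (p - 1) div b"
  have br: "p - 1 = b * r" using b by (simp add: r_def)
  hence "r > 0" using p_ge_3 by (auto intro!: Nat.gr0I)
  have "[x ^ r = 1] (mod p) \<longleftrightarrow> [g ^ (ind x * r) = g ^ 0] (mod p)"
  proof -
    have "[g ^ (ind x * r) = x ^ r] (mod p)"
      unfolding power_mult by (intro cong_pow power_ind_cong x)
    thus ?thesis by (auto intro: cong_trans cong_sym)
  qed
  also have "\<dots> \<longleftrightarrow> b * r dvd ind x * r" by (simp only: power_cong_iff cong_0_iff br)
  also have "\<dots> \<longleftrightarrow> b dvd ind x" using \<open>r > 0\<close> by simp
  finally show ?thesis by (simp add: r_def)
qed

lemma card_unity_roots:
  assumes "b dvd p - 1"
  shows "card (unity_roots p ((p - 1) div b)) = (p - 1) div b"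
proof -
  have "unity_roots p ((p - 1) div b) = {x \<in> {1..p-1}. b dvd ind x}"
    using assms by (auto simp: unity_roots_def dvd_ind_iff)
  also have "card \<dots> = card {i \<in> {..<p-1}. b dvd i}"
    by (rule bij_betw_same_card[OF bij_betw_restrict_Collect[OF bij_betw_ind]])
  also have "\<dots> = (p - 1) div b"
    using card_multiples_less[OF assms] by simp
  finally show ?thesis .
qed

lemma dvd_and_dvd_ind_eq_image:
  assumes a: "a dvd p - 1" and b: "b dvd p - 1"
  shows "{h \<in> {1..p-1}. a dvd h \<and> b dvd ind h} =
         (\<lambda>j. a * j) ` {j \<in> {1..(p-1) div a}. j \<in> unity_roots_coset p a ((p-1) div b)}"
    (is "?H = (\<lambda>j. a * j) ` ?J")
proof -
  have "a > 0" using a p_ge_3 by (cases "a = 0") auto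
  have range: "a * j \<in> {1..p-1} \<longleftrightarrow> j \<in> {1..(p-1) div a}" for j
    using a \<open>a > 0\<close> by (auto elim!: dvdE)
  have "(p - 1) div a \<le> p - 1" by (rule div_le_dividend)
  hence J_sub: "{1..(p-1) div a} \<subseteq> {1..p-1}" by auto
  have "a * j \<in> ?H \<longleftrightarrow> j \<in> ?J" for j
  proof (cases "j \<in> {1..(p-1) div a}")
    case True
    hence "a * j \<in> {1..p-1}" "j \<in> {1..p-1}" using range subsetD[OF J_sub] by blast+
    thus ?thesis using True b by (simp add: unity_roots_coset_def dvd_ind_iff)
  qed (use range in blast)
  moreover have "?H \<subseteq> range (\<lambda>j. a * j)" by blast
  ultimately show ?thesis by blast
qed

lemma card_dvd_and_dvd_ind_approx:
  assumes a: "a dvd p - 1" and b: "b dvd p - 1"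
  shows "\<bar>real (card {h \<in> {1..p-1}. a dvd h \<and> b dvd ind h}) - real (p - 1) ^ 2 / (real a * real b * real p)\<bar>
           \<le> sqrt (real p) * (1 + ln ((real p - 1) / 2))"
proof -
  define r where "r = (p - 1) div b"
  define N where "N = (p - 1) div a"
  define C where "C = unity_roots_coset p a r"
  have "a \<in> {1..p-1}" using a p_ge_3 by (cases "a = 0") (auto intro: dvd_imp_le)
  have C_sub: "C \<subseteq> {1..p-1}" by (auto simp: C_def unity_roots_coset_def)
  have card_C: "card C = r"
    using card_unity_roots_coset[OF prime \<open>a \<in> {1..p-1}\<close>] card_unity_roots[OF b]
    by (simp add: C_def r_def)
  have "card {h \<in> {1..p-1}. a dvd h \<and> b dvd ind h} = card {j \<in> {1..N}. j \<in> C}"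
    unfolding dvd_and_dvd_ind_eq_image[OF a b] C_def N_def r_def
    using \<open>a \<in> {1..p-1}\<close> by (intro card_image) (auto simp: inj_on_def)
  moreover have "real (card C) * real N / real p = real (p - 1) ^ 2 / (real a * real b * real p)"
    using a b by (simp add: card_C r_def N_def real_of_nat_div power2_eq_square)
  moreover have "\<bar>real (card {j \<in> {1..N}. j \<in> C}) - real (card C) * real N / real p\<bar>
                 \<le> sqrt (real p) * (1 + ln ((real p - 1) / 2))"
  proof (rule card_interval_deviation_le[OF odd p_ge_3])
    show "C \<subseteq> {..<p}" using C_sub by (auto dest!: subsetD)
    show "N < p" using p_ge_3 by (simp add: N_def le_less_trans[OF div_le_dividend])
    show "norm (exp_sum p C t) \<le> sqrt (real p)" if "t \<in> {1..p-1}" for t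
    proof (rule norm_exp_sum_le_sqrt[OF prime C_sub _ _ _ that])
      show "unity_roots p r \<subseteq> {1..p-1}" by (auto simp: unity_roots_def)
      show "card (unity_roots p r) = card C" using card_C card_unity_roots[OF b] by (simp add: r_def)
      show "u * x mod p \<in> C" if "u \<in> unity_roots p r" "x \<in> C" for u x
        using mult_mod_mem_unity_roots_coset[OF prime that[unfolded C_def]] by (simp add: C_def)
    qed
  qed
  ultimately show ?thesis by simp
qed

lemma primroots_eq_image:
  "{g' \<in> {1..p-1}. residue_primroot p g'} = (\<lambda>j. g ^ j mod p) ` totatives (p - 1)"
  using bij_betw_imp_surj_on[OF residue_primroot_bij_betw_primroots[OF prime_gt_1_nat[OF prime] primroot]]
  by (simp add: totient_prime[OF prime] totatives_eq)

lemma exists_primroot_power_cong_iff: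
  assumes h: "h \<in> {1..p-1}"
  shows "(\<exists>g'\<in>{1..p-1}. residue_primroot p g' \<and> [g' ^ h = h] (mod p)) \<longleftrightarrow>
         gcd h (p - 1) = gcd (ind h) (p - 1)"
proof -
  have power_mod_cong_iff: "[(g ^ j mod p) ^ h = h] (mod p) \<longleftrightarrow> [j * h = ind h] (mod (p - 1))" for j
  proof -
    have "[(g ^ j mod p) ^ h = g ^ (j * h)] (mod p)"
      by (simp add: Cong.cong_def power_mod power_mult)
    moreover have "[h = g ^ ind h] (mod p)" using power_ind_cong[OF h] by (rule cong_sym)
    ultimately have "[(g ^ j mod p) ^ h = h] (mod p) \<longleftrightarrow> [g ^ (j * h) = g ^ ind h] (mod p)"
      by (meson cong_sym cong_trans)
    thus ?thesis by (simp add: power_cong_iff)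
  qed
  have "(\<exists>g'\<in>{1..p-1}. residue_primroot p g' \<and> [g' ^ h = h] (mod p)) \<longleftrightarrow>
        (\<exists>g'\<in>(\<lambda>j. g ^ j mod p) ` totatives (p - 1). [g' ^ h = h] (mod p))"
    unfolding primroots_eq_image[symmetric] by auto
  also have "\<dots> \<longleftrightarrow> (\<exists>j\<in>totatives (p - 1). [j * h = ind h] (mod (p - 1)))"
    using power_mod_cong_iff by simp
  also have "\<dots> \<longleftrightarrow> (\<exists>j. coprime j (p - 1) \<and> [j * h = ind h] (mod (p - 1)))"
    using p_ge_3 by (intro exists_totative_iff_exists_coprime) auto
  also have "\<dots> \<longleftrightarrow> gcd h (p - 1) = gcd (ind h) (p - 1)"
    using p_ge_3 by (intro exists_coprime_mult_cong_iff_gcd_eq) auto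
  finally show ?thesis .
qed

lemma G_PR_ANY_eq_sum_card_gcd_eq:
  "G_PR_ANY p = (\<Sum>e | e dvd p - 1. card {h \<in> {1..p-1}. gcd h (p - 1) = e \<and> gcd (ind h) (p - 1) = e})"
proof -
  have "G_PR_ANY p = card {h \<in> {1..p-1}. gcd h (p - 1) = gcd (ind h) (p - 1)}"
    unfolding G_PR_ANY_def using exists_primroot_power_cong_iff by (intro arg_cong[where f = card]) auto
  also have "\<dots> = (\<Sum>e | e dvd p - 1. card {h \<in> {1..p-1}. gcd h (p - 1) = e \<and> gcd (ind h) (p - 1) = e})"
    using p_ge_3 by (intro card_eq_sum_card_common_value) auto
  finally show ?thesis .
qed

lemma card_gcd_eq_expansion:
  assumes e: "e dvd p - 1"
  defines "P \<equiv> Pow (prime_factors ((p - 1) div e))"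
  shows "real (card {h \<in> {1..p-1}. gcd h (p - 1) = e \<and> gcd (ind h) (p - 1) = e}) =
         (\<Sum>S\<in>P. \<Sum>T\<in>P. (-1) ^ card S * (-1) ^ card T *
            real (card {h \<in> {1..p-1}. e * \<Prod>S dvd h \<and> e * \<Prod>T dvd ind h}))"
proof -
  have p1: "p - 1 > 0" using p_ge_3 by simp
  have "real (card {h \<in> {1..p-1}. gcd h (p - 1) = e \<and> gcd (ind h) (p - 1) = e}) =
        (\<Sum>h\<in>{1..p-1}. of_bool (gcd h (p - 1) = e) * of_bool (gcd (ind h) (p - 1) = e))"
    by (simp only: real_card_eq_sum_of_bool finite_atLeastAtMost of_bool_conj)
  also have "\<dots> = (\<Sum>h\<in>{1..p-1}. \<Sum>S\<in>P. \<Sum>T\<in>P. (-1) ^ card S * (-1) ^ card T *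
                     (of_bool (e * \<Prod>S dvd h) * of_bool (e * \<Prod>T dvd ind h)))"
    unfolding of_bool_gcd_eq_expansion[OF p1 e] P_def sum_product by (simp only: mult_ac)
  also have "\<dots> = (\<Sum>S\<in>P. \<Sum>h\<in>{1..p-1}. \<Sum>T\<in>P. (-1) ^ card S * (-1) ^ card T *
                     (of_bool (e * \<Prod>S dvd h) * of_bool (e * \<Prod>T dvd ind h)))"
    by (rule sum.swap)
  also have "\<dots> = (\<Sum>S\<in>P. \<Sum>T\<in>P. \<Sum>h\<in>{1..p-1}. (-1) ^ card S * (-1) ^ card T *
                     (of_bool (e * \<Prod>S dvd h) * of_bool (e * \<Prod>T dvd ind h)))"
    by (intro sum.cong refl sum.swap)
  also have "\<dots> = (\<Sum>S\<in>P. \<Sum>T\<in>P. (-1) ^ card S * (-1) ^ card T *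
                     real (card {h \<in> {1..p-1}. e * \<Prod>S dvd h \<and> e * \<Prod>T dvd ind h}))"
    by (simp only: real_card_eq_sum_of_bool finite_atLeastAtMost of_bool_conj sum_distrib_left)
  finally show ?thesis .
qed

lemma card_gcd_eq_approx:
  assumes e: "e dvd p - 1"
  shows "\<bar>real (card {h \<in> {1..p-1}. gcd h (p - 1) = e \<and> gcd (ind h) (p - 1) = e})
            - real (totient ((p - 1) div e)) ^ 2 / real p\<bar>
         \<le> real (card (Pow (prime_factors ((p - 1) div e)))) ^ 2 * (sqrt (real p) * (1 + ln ((real p - 1) / 2)))"
proof -
  define m where "m = (p - 1) div e"
  define P where "P = Pow (prime_factors m)"
  define E where "E = sqrt (real p) * (1 + ln ((real p - 1) / 2))"
  define sg where "sg S T = ((-1) ^ card S * (-1) ^ card T :: real)" for S T :: "nat set"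
  define A where "A S T = real (card {h \<in> {1..p-1}. e * \<Prod>S dvd h \<and> e * \<Prod>T dvd ind h})" for S T
  define M where "M S T = real (p - 1) ^ 2 / (real (e * \<Prod>S) * real (e * \<Prod>T) * real p)" for S T
  have pem: "p - 1 = e * m" using e by (simp add: m_def)
  hence "e > 0" "m > 0" using p_ge_3 by (auto intro!: Nat.gr0I)
  have "(\<Sum>S\<in>P. \<Sum>T\<in>P. sg S T * M S T) = real (totient m) ^ 2 / real p"
    unfolding sg_def M_def P_def pem by (rule sum_Pow_prime_factors_main_terms[OF \<open>e > 0\<close> \<open>m > 0\<close>])
  moreover have "real (card {h \<in> {1..p-1}. gcd h (p - 1) = e \<and> gcd (ind h) (p - 1) = e}) =
                 (\<Sum>S\<in>P. \<Sum>T\<in>P. sg S T * A S T)"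
    unfolding card_gcd_eq_expansion[OF e] sg_def A_def P_def m_def ..
  ultimately have "\<bar>real (card {h \<in> {1..p-1}. gcd h (p - 1) = e \<and> gcd (ind h) (p - 1) = e})
                     - real (totient m) ^ 2 / real p\<bar> = \<bar>\<Sum>S\<in>P. \<Sum>T\<in>P. sg S T * (A S T - M S T)\<bar>"
    by (simp add: sum_subtractf right_diff_distrib)
  also have "\<dots> \<le> (\<Sum>S\<in>P. \<Sum>T\<in>P. \<bar>sg S T * (A S T - M S T)\<bar>)"
    by (intro order.trans[OF sum_abs] sum_mono sum_abs)
  also have "\<dots> \<le> (\<Sum>S\<in>P. \<Sum>T\<in>P. E)"
  proof (intro sum_mono)
    fix S T assume "S \<in> P" "T \<in> P"
    hence "e * \<Prod>S dvd p - 1" "e * \<Prod>T dvd p - 1"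
      unfolding pem P_def by (auto intro: mult_dvd_mono prod_subset_prime_factors_dvd)
    hence "\<bar>A S T - M S T\<bar> \<le> E"
      unfolding A_def M_def E_def by (rule card_dvd_and_dvd_ind_approx)
    thus "\<bar>sg S T * (A S T - M S T)\<bar> \<le> E" by (simp add: sg_def abs_mult)
  qed
  also have "\<dots> = real (card P) ^ 2 * E" by (simp add: power2_eq_square)
  finally show ?thesis by (simp add: P_def E_def m_def)
qed

lemma G_PR_ANY_approx:
  "\<bar>real (G_PR_ANY p) - (\<Sum>e | e dvd p - 1. real (totient ((p - 1) div e)) ^ 2) / real p\<bar>
     \<le> real (num_divisors (p - 1)) ^ 3 * (sqrt (real p) * (1 + ln ((real p - 1) / 2)))"
proof -
  define D where "D = {e. e dvd p - 1}"
  define E where "E = sqrt (real p) * (1 + ln ((real p - 1) / 2))"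
  define d where "d = real (num_divisors (p - 1))"
  have "finite D" using p_ge_3 by (simp add: D_def)
  have "E \<ge> 0" using p_ge_3 by (simp add: E_def)
  have "\<bar>real (G_PR_ANY p) - (\<Sum>e\<in>D. real (totient ((p - 1) div e)) ^ 2) / real p\<bar> =
        \<bar>\<Sum>e\<in>D. real (card {h \<in> {1..p-1}. gcd h (p - 1) = e \<and> gcd (ind h) (p - 1) = e})
                   - real (totient ((p - 1) div e)) ^ 2 / real p\<bar>"
    by (simp add: G_PR_ANY_eq_sum_card_gcd_eq sum_subtractf sum_divide_distrib D_def)
  also have "\<dots> \<le> (\<Sum>e\<in>D. d ^ 2 * E)"
  proof (rule order.trans[OF sum_abs sum_mono])
    fix e assume "e \<in> D"
    hence "e dvd p - 1" "(p - 1) div e dvd p - 1" by (auto simp: D_def)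
    hence "real (card (Pow (prime_factors ((p - 1) div e)))) ^ 2 * E \<le> d ^ 2 * E"
      using card_Pow_prime_factors_le_num_divisors[of "p - 1"] p_ge_3 \<open>E \<ge> 0\<close>
      by (intro mult_right_mono power_mono) (auto simp: d_def)
    thus "\<bar>real (card {h \<in> {1..p-1}. gcd h (p - 1) = e \<and> gcd (ind h) (p - 1) = e})
            - real (totient ((p - 1) div e)) ^ 2 / real p\<bar> \<le> d ^ 2 * E"
      using card_gcd_eq_approx[OF \<open>e dvd p - 1\<close>] unfolding E_def by linarith
  qed
  also have "\<dots> = d ^ 3 * E" by (simp add: D_def d_def num_divisors_def power3_eq_cube power2_eq_square)
  finally show ?thesis by (simp add: D_def d_def E_def)
qed

end

theorem mainTheorem3:
  fixes p :: nat
  assumes "prime p" and "odd p"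
  shows "\<bar>real (G_PR_ANY p) - (1 / real (p - 1)) * (\<Sum>e | e dvd (p - 1). real (totient ((p - 1) div e)) ^ 2)\<bar>
         \<le> real (num_divisors (p - 1)) ^ 3 * sqrt (real p) * (1 + ln (real p))"
proof -
  obtain g where "residue_primroot p g"
    using prime_primitive_root_exists[OF prime_gt_1_nat] assms(1) by blast
  then interpret odd_prime_primroot p g using assms by unfold_locales
  define Z where "Z = (\<Sum>e | e dvd p - 1. real (totient ((p - 1) div e)) ^ 2)"
  define d where "d = real (num_divisors (p - 1))"
  have "\<bar>real (G_PR_ANY p) - Z / real p\<bar> \<le> d ^ 3 * (sqrt (real p) * (1 + ln ((real p - 1) / 2)))"
    unfolding Z_def d_def by (rule G_PR_ANY_approx)
  moreover have "\<bar>Z / real p - Z / real (p - 1)\<bar> \<le> d"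
    using sum_totient_sq_div_Suc_approx[of "p - 1"] p_ge_3 by (simp add: Z_def d_def)
  moreover have "d ^ 3 * (sqrt (real p) * (1 + ln ((real p - 1) / 2))) + d \<le> d ^ 3 * sqrt (real p) * (1 + ln (real p))"
    using cube_mult_sqrt_ln_half_add_le two_le_num_divisors[of "p - 1"] p_ge_3 by (simp add: d_def)
  moreover have "\<bar>real (G_PR_ANY p) - Z / real (p - 1)\<bar>
                 \<le> \<bar>real (G_PR_ANY p) - Z / real p\<bar> + \<bar>Z / real p - Z / real (p - 1)\<bar>"
    using abs_triangle_ineq[of "real (G_PR_ANY p) - Z / real p" "Z / real p - Z / real (p - 1)"] by simp
  ultimately have "\<bar>real (G_PR_ANY p) - Z / real (p - 1)\<bar> \<le> d ^ 3 * sqrt (real p) * (1 + ln (real p))"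
    by linarith
  thus ?thesis by (simp add: Z_def d_def)
qed

end
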